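(* Let $A$ be an algebra which is not $q_\omega$-compact. Then $\mathrm{pvar}(A)_\omega\neq \mathrm{qvar}(A)_\omega$, i.e. the class of finitely generated algebras in the prevariety generated by $A$ differs from the class of finitely generated algebras in the quasivariety generated by $A$. Moreover, there exists an ultrapower $B$ of $A$ that is not geometrically equivalent to $A$.
   Context: Let $\mathcal{V}=\mathrm{var}(A)$; for $n\geq1$, $X_n=\{x_1,\dots,x_n\}$ and $F_{\mathcal{V}}(X_n)$ is the relatively free algebra of $\mathcal{V}$ on $X_n$. For an algebra $D\in\mathcal{V}$ and $S\subseteq F_{\mathcal{V}}(X_n)^2$, $\mathrm{Rad}_D(S)$ is the set of all $(p,q)\in F_{\mathcal{V}}(X_n)^2$ such that every $d\in D^n$ with $p'(d)=q'(d)$ for all $(p',q')\in S$ also satisfies $p(d)=q(d)$. $A$ is $q_\omega$-compact if for every $n$, every $S\subseteq F_{\mathcal{V}}(X_n)^2$ and every $(p,q)\in\mathrm{Rad}_A(S)$ there is a finite $S_0\subseteq S$ with $(p,q)\in\mathrm{Rad}_A(S_0)$. A prevariety is a class closed under isomorphic copies, direct products and subalgebras; a quasivariety is a class axiomatized by quasi-identities (equivalently closed under isomorphic copies, subalgebras, direct products and ultraproducts). $\mathrm{pvar}(A)$ and $\mathrm{qvar}(A)$ are the smallest prevariety and quasivariety containing $A$; for a class $\mathfrak{X}$, $\mathfrak{X}_\omega$ is its subclass of finitely generated algebras. $A$ and $B$ are geometrically equivalent if $\mathrm{Rad}_A(S)=\mathrm{Rad}_B(S)$ for all $n$ and all $S\subseteq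 F_{\mathcal{V}}(X_n)^2$. *)

theory Defs
  imports Main
begin

datatype ('f,'v) trm = Var 'v | App 'f "('f,'v) trm list"

record ('f,'a) alg =
  carr :: "'a set"
  ops  :: "'f \<Rightarrow> 'a list \<Rightarrow> 'a"

definition is_alg :: "('f \<Rightarrow> nat) \<Rightarrow> ('f,'a) alg \<Rightarrow> bool" where
  "is_alg ar A \<longleftrightarrow> carr A \<noteq> {} \<and>
     (\<forall>f xs. length xs = ar f \<and> set xs \<subseteq> carr A \<longrightarrow> ops A f xs \<in> carr A)"

fun wf_trm :: "('f \<Rightarrow> nat) \<Rightarrow> nat \<Rightarrow> ('f,nat) trm \<Rightarrow> bool" where
  "wf_trm ar n (Var i) = (i < n)"
| "wf_trm ar n (App f ts) = (length ts = ar f \<and> (\<forall>t\<in>set ts. wf_trm ar n t))"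

fun eval :: "('f,'a) alg \<Rightarrow> (nat \<Rightarrow> 'a) \<Rightarrow> ('f,nat) trm \<Rightarrow> 'a" where
  "eval A d (Var i) = d i"
| "eval A d (App f ts) = ops A f (map (eval A d) ts)"

text \<open>Pairs of elements of the free algebra on X_n, represented by pairs of terms.\<close>
definition tpairs :: "('f \<Rightarrow> nat) \<Rightarrow> nat \<Rightarrow> (('f,nat) trm \<times> ('f,nat) trm) set" where
  "tpairs ar n = {(p,q). wf_trm ar n p \<and> wf_trm ar n q}"

definition Rad :: "('f \<Rightarrow> nat) \<Rightarrow> ('f,'a) alg \<Rightarrow> nat \<Rightarrow> (('f,nat) trm \<times> ('f,nat) trm) set
    \<Rightarrow> (('f,nat) trm \<times> ('f,nat) trm) set" where
  "Rad ar D n S = {(p,q) \<in> tpairs ar n.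
     \<forall>d. (\<forall>i<n. d i \<in> carr D) \<longrightarrow> (\<forall>(p',q')\<in>S. eval D d p' = eval D d q')
          \<longrightarrow> eval D d p = eval D d q}"

definition q_omega_compact :: "('f \<Rightarrow> nat) \<Rightarrow> ('f,'a) alg \<Rightarrow> bool" where
  "q_omega_compact ar A \<longleftrightarrow>
     (\<forall>n\<ge>1. \<forall>S \<subseteq> tpairs ar n. \<forall>pq \<in> Rad ar A n S.
        \<exists>S0 \<subseteq> S. finite S0 \<and> pq \<in> Rad ar A n S0)"

definition geom_equiv :: "('f \<Rightarrow> nat) \<Rightarrow> ('f,'a) alg \<Rightarrow> ('f,'b) alg \<Rightarrow> bool" where
  "geom_equiv ar A B \<longleftrightarrow> (\<forall>n\<ge>1. \<forall>S \<subseteq> tpairs ar n. Rad ar A n S = Rad ar B n S)"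

definition hom :: "('f \<Rightarrow> nat) \<Rightarrow> ('f,'a) alg \<Rightarrow> ('f,'b) alg \<Rightarrow> ('a \<Rightarrow> 'b) \<Rightarrow> bool" where
  "hom ar A B h \<longleftrightarrow> (\<forall>x\<in>carr A. h x \<in> carr B) \<and>
     (\<forall>f xs. length xs = ar f \<and> set xs \<subseteq> carr A \<longrightarrow> h (ops A f xs) = ops B f (map h xs))"

definition power_alg :: "('f,'a) alg \<Rightarrow> 'i set \<Rightarrow> ('f,'i \<Rightarrow> 'a) alg" where
  "power_alg A I = \<lparr> carr = {g. (\<forall>i\<in>I. g i \<in> carr A) \<and> (\<forall>i. i \<notin> I \<longrightarrow> g i = undefined)},
                     ops = (\<lambda>f gs i. if i \<in> I then ops A f (map (\<lambda>g. g i) gs) else undefined) \<rparr>"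

text \<open>B belongs to pvar(A) = ISP(A): B embeds into a direct power of A.  The index set is
  taken of type ('b => 'a) set, which suffices (one may always index by homomorphisms B -> A).\<close>
definition in_pvar :: "('f \<Rightarrow> nat) \<Rightarrow> ('f,'a) alg \<Rightarrow> ('f,'b) alg \<Rightarrow> bool" where
  "in_pvar ar A B \<longleftrightarrow> is_alg ar B \<and>
     (\<exists>(I :: ('b \<Rightarrow> 'a) set) e. hom ar B (power_alg A I) e \<and> inj_on e (carr B))"

type_synonym 'f qid = "(('f,nat) trm \<times> ('f,nat) trm) list \<times> (('f,nat) trm \<times> ('f,nat) trm)"

definition wf_qid :: "('f \<Rightarrow> nat) \<Rightarrow> 'f qid \<Rightarrow> bool" where
  "wf_qid ar \<phi> \<longleftrightarrow> (\<exists>n. set (fst \<phi>) \<subseteq> tpairs ar n \<and> snd \<phi> \<in> tpairs ar n)"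

definition sat_qid :: "('f,'a) alg \<Rightarrow> 'f qid \<Rightarrow> bool" where
  "sat_qid B \<phi> \<longleftrightarrow> (\<forall>d. (\<forall>i. d i \<in> carr B) \<longrightarrow>
      (\<forall>(s,t)\<in>set (fst \<phi>). eval B d s = eval B d t) \<longrightarrow>
      eval B d (fst (snd \<phi>)) = eval B d (snd (snd \<phi>)))"

definition in_qvar :: "('f \<Rightarrow> nat) \<Rightarrow> ('f,'a) alg \<Rightarrow> ('f,'b) alg \<Rightarrow> bool" where
  "in_qvar ar A B \<longleftrightarrow> is_alg ar B \<and>
     (\<forall>\<phi>. wf_qid ar \<phi> \<longrightarrow> sat_qid A \<phi> \<longrightarrow> sat_qid B \<phi>)"

definition closed_sub :: "('f \<Rightarrow> nat) \<Rightarrow> ('f,'a) alg \<Rightarrow> 'a set \<Rightarrow> bool" where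
  "closed_sub ar B C \<longleftrightarrow> C \<subseteq> carr B \<and>
     (\<forall>f xs. length xs = ar f \<and> set xs \<subseteq> C \<longrightarrow> ops B f xs \<in> C)"

definition fin_gen :: "('f \<Rightarrow> nat) \<Rightarrow> ('f,'a) alg \<Rightarrow> bool" where
  "fin_gen ar B \<longleftrightarrow> (\<exists>G. finite G \<and> G \<subseteq> carr B \<and>
     carr B = \<Inter>{C. G \<subseteq> C \<and> closed_sub ar B C})"

definition ultrafilter_on :: "'i set \<Rightarrow> 'i set set \<Rightarrow> bool" where
  "ultrafilter_on I U \<longleftrightarrow> U \<subseteq> Pow I \<and> I \<in> U \<and> {} \<notin> U \<and>
     (\<forall>X\<in>U. \<forall>Y\<in>U. X \<inter> Y \<in> U) \<and>
     (\<forall>X\<in>U. \<forall>Y. X \<subseteq> Y \<and> Y \<subseteq> I \<longrightarrow> Y \<in> U) \<and>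
     (\<forall>X. X \<subseteq> I \<longrightarrow> X \<in> U \<or> I - X \<in> U)"

definition up_class :: "('f,'a) alg \<Rightarrow> 'i set \<Rightarrow> 'i set set \<Rightarrow> ('i \<Rightarrow> 'a) \<Rightarrow> ('i \<Rightarrow> 'a) set" where
  "up_class A I U g = {h \<in> carr (power_alg A I). {i \<in> I. g i = h i} \<in> U}"

definition ultrapower :: "('f,'a) alg \<Rightarrow> 'i set \<Rightarrow> 'i set set \<Rightarrow> ('f, ('i \<Rightarrow> 'a) set) alg" where
  "ultrapower A I U = \<lparr> carr = up_class A I U ` carr (power_alg A I),
     ops = (\<lambda>f Xs. up_class A I U (ops (power_alg A I) f (map (\<lambda>X. SOME g. g \<in> X) Xs))) \<rparr>"

end

theory Submission
  imports Defs
begin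

text \<open>
  Non-compactness yields \<open>n\<close>, \<open>S\<close> and \<open>(p,q) \<in> Rad\<^sub>A(S)\<close> lying in no \<open>Rad\<^sub>A(S\<^sub>0)\<close> with
  \<open>S\<^sub>0 \<subseteq> S\<close> finite. The union \<open>R\<close> of all these \<open>Rad\<^sub>A(S\<^sub>0)\<close> is a congruence of the term
  algebra on \<open>X\<^sub>n\<close>, and the quotient \<open>B\<close> by \<open>R\<close> is finitely generated. \<open>B\<close> satisfies every
  quasi-identity of \<open>A\<close>, because the finitely many hypotheses of a quasi-identity already lie in
  one \<open>Rad\<^sub>A(S\<^sub>0)\<close>. But \<open>B\<close> does not embed into a power of \<open>A\<close>: every coordinate of such an
  embedding is a solution of \<open>S\<close> in \<open>A\<close>, hence identifies \<open>p\<close> and \<open>q\<close>, which \<open>R\<close> separates.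

  For the ultrapower, index by the finite subsets \<open>S\<^sub>0\<close> of \<open>S\<close>, pick at each index a solution of
  \<open>S\<^sub>0\<close> separating \<open>p\<close> and \<open>q\<close>, and use an ultrafilter containing every set
  \<open>{S\<^sub>0. x \<in> S\<^sub>0}\<close>. The induced point of the ultrapower solves all of \<open>S\<close> but still separates
  \<open>p\<close> and \<open>q\<close>, so the radicals of \<open>S\<close> over \<open>A\<close> and over the ultrapower differ.
\<close>

subsection \<open>Evaluation, homomorphisms and direct powers\<close>

lemma eval_in_carr:
  assumes "is_alg ar A" and "\<forall>i<n. d i \<in> carr A" and "wf_trm ar n t"
  shows "eval A d t \<in> carr A"
  using assms(3)
proof (induction t)
  case (App f ts)
  then have "set (map (eval A d) ts) \<subseteq> carr A" and "length (map (eval A d) ts) = ar f"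
    by auto
  with assms(1) show ?case
    unfolding is_alg_def by simp
qed (use assms(2) in simp)

lemma hom_eval:
  assumes "is_alg ar B" and "hom ar B C h" and "\<forall>i<n. d i \<in> carr B" and "wf_trm ar n t"
  shows "h (eval B d t) = eval C (\<lambda>i. h (d i)) t"
  using assms(4)
proof (induction t)
  case (App f ts)
  have "set (map (eval B d) ts) \<subseteq> carr B"
    using App.prems eval_in_carr[OF assms(1,3)] by auto
  moreover have "length (map (eval B d) ts) = ar f"
    using App.prems by simp
  ultimately have "h (eval B d (App f ts)) = ops C f (map (\<lambda>t. h (eval B d t)) ts)"
    using assms(2) unfolding hom_def by (simp add: comp_def)
  also have "map (\<lambda>t. h (eval B d t)) ts = map (eval C (\<lambda>i. h (d i))) ts"
    using App by simp
  finally show ?case by simp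
qed simp

lemma eval_power_alg:
  assumes "j \<in> I"
  shows "eval (power_alg A I) G t j = eval A (\<lambda>i. G i j) t"
proof (induction t)
  case (App f ts)
  then show ?case
    using assms by (simp add: power_alg_def comp_def cong: map_cong)
qed simp

lemma is_alg_power_alg:
  assumes "is_alg ar A"
  shows "is_alg ar (power_alg A I)"
proof -
  obtain a where "a \<in> carr A"
    using assms unfolding is_alg_def by blast
  then have "(\<lambda>i. if i \<in> I then a else undefined) \<in> carr (power_alg A I)"
    by (simp add: power_alg_def)
  then have "carr (power_alg A I) \<noteq> {}"
    by blast
  moreover have "ops A f (map (\<lambda>g. g i) gs) \<in> carr A"
    if "set gs \<subseteq> carr (power_alg A I)" "length gs = ar f" "i \<in> I" for f gs i
  proof -
    have "set (map (\<lambda>g. g i) gs) \<subseteq> carr A"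
      using that by (auto simp: power_alg_def)
    with that(2) assms show ?thesis
      unfolding is_alg_def by simp
  qed
  ultimately show ?thesis
    unfolding is_alg_def by (auto simp: power_alg_def)
qed

subsection \<open>Radicals\<close>

lemma RadI:
  assumes "wf_trm ar n p" and "wf_trm ar n q"
    and "\<And>d. \<forall>i<n. d i \<in> carr A \<Longrightarrow> \<forall>(s,t)\<in>S. eval A d s = eval A d t \<Longrightarrow> eval A d p = eval A d q"
  shows "(p,q) \<in> Rad ar A n S"
  using assms unfolding Rad_def tpairs_def by auto

lemma RadD:
  assumes "(p,q) \<in> Rad ar A n S" and "\<forall>i<n. d i \<in> carr A"
    and "\<forall>(s,t)\<in>S. eval A d s = eval A d t"
  shows "eval A d p = eval A d q"
  using assms unfolding Rad_def by auto

lemma Rad_wf: "(p,q) \<in> Rad ar A n S \<Longrightarrow> wf_trm ar n p \<and> wf_trm ar n q"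
  unfolding Rad_def tpairs_def by auto

lemma Rad_mono: "S \<subseteq> S' \<Longrightarrow> Rad ar A n S \<subseteq> Rad ar A n S'"
  unfolding Rad_def by fast

lemma subset_Rad: "S \<subseteq> tpairs ar n \<Longrightarrow> S \<subseteq> Rad ar A n S"
  unfolding Rad_def by auto

lemma equiv_Rad: "equiv {t. wf_trm ar n t} (Rad ar A n S)"
  by (rule equivI) (auto simp: Rad_def tpairs_def refl_on_def sym_def trans_def)

lemma Rad_App:
  assumes "list_all2 (\<lambda>s t. (s,t) \<in> Rad ar A n S) ss ts" and "length ss = ar f"
  shows "(App f ss, App f ts) \<in> Rad ar A n S"
proof (rule RadI)
  show "wf_trm ar n (App f ss)" and "wf_trm ar n (App f ts)"
    using assms by (fastforce simp: list_all2_conv_all_nth in_set_conv_nth dest: Rad_wf)+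
next
  fix d assume d: "\<forall>i<n. d i \<in> carr A" and sol: "\<forall>(s,t)\<in>S. eval A d s = eval A d t"
  have "list_all2 (\<lambda>s t. eval A d s = eval A d t) ss ts"
    using assms(1) by (rule list_all2_mono) (rule RadD[OF _ d sol])
  then have "list_all2 (=) (map (eval A d) ss) (map (eval A d) ts)"
    by (simp add: list_all2_map1 list_all2_map2)
  then show "eval A d (App f ss) = eval A d (App f ts)"
    by (simp add: list.rel_eq)
qed

subsection \<open>Quotients of the term algebra\<close>

fun trm_subst :: "(nat \<Rightarrow> ('f,nat) trm) \<Rightarrow> ('f,nat) trm \<Rightarrow> ('f,nat) trm" where
  "trm_subst \<sigma> (Var i) = \<sigma> i"
| "trm_subst \<sigma> (App f ts) = App f (map (trm_subst \<sigma>) ts)"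

lemma trm_subst_Var: "trm_subst Var t = t"
  by (induction t) (simp_all add: map_idI)

lemma wf_trm_subst: "wf_trm ar m t \<Longrightarrow> \<forall>i<m. wf_trm ar n (\<sigma> i) \<Longrightarrow> wf_trm ar n (trm_subst \<sigma> t)"
  by (induction t) auto

lemma eval_trm_subst: "eval A d (trm_subst \<sigma> t) = eval A (\<lambda>i. eval A d (\<sigma> i)) t"
  by (induction t) (simp_all add: comp_def cong: map_cong)

definition term_congruence :: "('f \<Rightarrow> nat) \<Rightarrow> nat \<Rightarrow> (('f,nat) trm \<times> ('f,nat) trm) set \<Rightarrow> bool" where
  "term_congruence ar n R \<longleftrightarrow> equiv {t. wf_trm ar n t} R \<and>
     (\<forall>f ss ts. length ss = ar f \<longrightarrow> list_all2 (\<lambda>s t. (s,t) \<in> R) ss ts \<longrightarrow> (App f ss, App f ts) \<in> R)"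

definition term_quotient :: "('f \<Rightarrow> nat) \<Rightarrow> nat \<Rightarrow> (('f,nat) trm \<times> ('f,nat) trm) set
    \<Rightarrow> ('f, ('f,nat) trm set) alg" where
  "term_quotient ar n R = \<lparr> carr = {t. wf_trm ar n t} // R,
     ops = (\<lambda>f Xs. R `` {App f (map (\<lambda>X. SOME t. t \<in> X) Xs)}) \<rparr>"

lemma class_in_term_quotient: "wf_trm ar n t \<Longrightarrow> R `` {t} \<in> carr (term_quotient ar n R)"
  by (simp add: term_quotient_def quotientI)

context
  fixes ar :: "'f \<Rightarrow> nat" and n :: nat and R :: "(('f,nat) trm \<times> ('f,nat) trm) set"
  assumes congruence: "term_congruence ar n R"
begin

lemma term_congruence_equiv: "equiv {t. wf_trm ar n t} R"
  using congruence unfolding term_congruence_def by blast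

lemma term_quotient_rep:
  assumes "X \<in> carr (term_quotient ar n R)"
  shows "wf_trm ar n (SOME t. t \<in> X)" and "R `` {SOME t. t \<in> X} = X"
proof -
  obtain t where t: "wf_trm ar n t" and X: "X = R `` {t}"
    using assms by (auto simp: term_quotient_def elim: quotientE)
  have "t \<in> X"
    using equiv_class_self[OF term_congruence_equiv] t X by simp
  then have "(SOME t. t \<in> X) \<in> X"
    by (rule someI)
  then have "(t, SOME t. t \<in> X) \<in> R"
    using X by simp
  then show "wf_trm ar n (SOME t. t \<in> X)" and "R `` {SOME t. t \<in> X} = X"
    using X equiv_class_eq_iff[OF term_congruence_equiv] by auto
qed

lemma term_quotient_ops:
  assumes "\<forall>t\<in>set ts. wf_trm ar n t" and "length ts = ar f"
  shows "ops (term_quotient ar n R) f (map (\<lambda>t. R `` {t}) ts) = R `` {App f ts}"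
proof -
  let ?reps = "map (\<lambda>t. SOME u. u \<in> R `` {t}) ts"
  have "(SOME u. u \<in> R `` {t}, t) \<in> R" if "wf_trm ar n t" for t
  proof -
    have "R `` {SOME u. u \<in> R `` {t}} = R `` {t}"
      using class_in_term_quotient[OF that] by (rule term_quotient_rep)
    from this term_congruence_equiv show ?thesis
      by (rule eq_equiv_class) (simp add: that)
  qed
  then have "list_all2 (\<lambda>s t. (s,t) \<in> R) ?reps ts"
    using assms(1) by (simp add: list_all2_conv_all_nth)
  then have "(App f ?reps, App f ts) \<in> R"
    using congruence assms(2) unfolding term_congruence_def by simp
  then show ?thesis
    by (simp add: term_quotient_def comp_def equiv_class_eq[OF term_congruence_equiv])
qed

lemma term_quotient_ops_closed:
  assumes "set Xs \<subseteq> carr (term_quotient ar n R)" and "length Xs = ar f"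
  shows "ops (term_quotient ar n R) f Xs \<in> carr (term_quotient ar n R)"
proof -
  have "wf_trm ar n (App f (map (\<lambda>X. SOME t. t \<in> X) Xs))"
    using assms term_quotient_rep(1) by auto
  then show ?thesis
    by (simp add: term_quotient_def quotientI)
qed

lemma term_quotient_is_alg:
  assumes "n \<ge> 1"
  shows "is_alg ar (term_quotient ar n R)"
proof -
  have "R `` {Var 0} \<in> carr (term_quotient ar n R)"
    using assms by (simp add: class_in_term_quotient)
  then show ?thesis
    using term_quotient_ops_closed unfolding is_alg_def by blast
qed

lemma eval_term_quotient:
  assumes "\<forall>i<m. wf_trm ar n (\<sigma> i)" and "wf_trm ar m t"
  shows "eval (term_quotient ar n R) (\<lambda>i. R `` {\<sigma> i}) t = R `` {trm_subst \<sigma> t}"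
  using assms(2)
proof (induction t)
  case (App f ts)
  have wf: "\<forall>t\<in>set (map (trm_subst \<sigma>) ts). wf_trm ar n t"
    using App.prems assms(1) by (auto intro: wf_trm_subst)
  have "map (eval (term_quotient ar n R) (\<lambda>i. R `` {\<sigma> i})) ts
      = map (\<lambda>t. R `` {t}) (map (trm_subst \<sigma>) ts)"
    using App.IH App.prems by (simp cong: map_cong)
  then have "eval (term_quotient ar n R) (\<lambda>i. R `` {\<sigma> i}) (App f ts)
      = ops (term_quotient ar n R) f (map (\<lambda>t. R `` {t}) (map (trm_subst \<sigma>) ts))"
    by (simp only: eval.simps)
  also have "\<dots> = R `` {App f (map (trm_subst \<sigma>) ts)}"
    by (rule term_quotient_ops) (use wf App.prems in simp_all)
  finally show ?case
    by simp
qed simp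

lemma term_quotient_fin_gen: "fin_gen ar (term_quotient ar n R)"
proof -
  let ?Q = "term_quotient ar n R"
  let ?G = "(\<lambda>i. R `` {Var i}) ` {..<n}"
  have G: "finite ?G" "?G \<subseteq> carr ?Q"
    by (auto simp: class_in_term_quotient)
  have "R `` {t} \<in> C" if "?G \<subseteq> C" and "closed_sub ar ?Q C" and "wf_trm ar n t" for C t
    using that(3)
  proof (induction t)
    case (App f ts)
    then have "set (map (\<lambda>t. R `` {t}) ts) \<subseteq> C"
      by auto
    then have "ops ?Q f (map (\<lambda>t. R `` {t}) ts) \<in> C"
      using that(2) App.prems unfolding closed_sub_def by simp
    with App.prems show ?case
      using term_quotient_ops by simp
  qed (use that(1) in auto)
  then have "carr ?Q \<subseteq> \<Inter>{C. ?G \<subseteq> C \<and> closed_sub ar ?Q C}"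
    by (auto simp: term_quotient_def elim!: quotientE)
  moreover have "closed_sub ar ?Q (carr ?Q)"
    using term_quotient_ops_closed unfolding closed_sub_def by blast
  ultimately show ?thesis
    using G unfolding fin_gen_def by blast
qed

lemma term_quotient_hom_power_coord:
  fixes A :: "('f,'a) alg"
  assumes "is_alg ar (term_quotient ar n R)" and "hom ar (term_quotient ar n R) (power_alg A I) e"
    and "j \<in> I" and "wf_trm ar n t"
  shows "e (R `` {t}) j = eval A (\<lambda>i. e (R `` {Var i}) j) t"
proof -
  have "\<forall>i<n. R `` {Var i} \<in> carr (term_quotient ar n R)"
    by (simp add: class_in_term_quotient)
  moreover have "R `` {t} = eval (term_quotient ar n R) (\<lambda>i. R `` {Var i}) t"
    using eval_term_quotient[where \<sigma> = Var and m = n, OF _ assms(4)] by (simp add: trm_subst_Var)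
  ultimately show ?thesis
    using hom_eval[OF assms(1,2) _ assms(4)] eval_power_alg[OF assms(3)] by simp
qed

lemma term_quotient_in_pvar_imp_Rad_subset:
  fixes A :: "('f,'a) alg"
  assumes "in_pvar ar A (term_quotient ar n R)"
  shows "Rad ar A n R \<subseteq> R"
proof (clarify)
  let ?Q = "term_quotient ar n R"
  obtain I :: "(('f,nat) trm set \<Rightarrow> 'a) set" and e
    where Q: "is_alg ar ?Q" and hom: "hom ar ?Q (power_alg A I) e" and inj: "inj_on e (carr ?Q)"
    using assms unfolding in_pvar_def by blast
  fix p q assume Rad: "(p,q) \<in> Rad ar A n R"
  then have wf: "wf_trm ar n p" "wf_trm ar n q"
    using Rad_wf by blast+
  have cls: "R `` {t} \<in> carr ?Q" if "wf_trm ar n t" for t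
    using that by (rule class_in_term_quotient)
  have "e (R `` {p}) j = e (R `` {q}) j" for j
  proof (cases "j \<in> I")
    case True
    let ?a = "\<lambda>i. e (R `` {Var i}) j"
    note coord = term_quotient_hom_power_coord[OF Q hom True]
    have "\<forall>i<n. e (R `` {Var i}) \<in> carr (power_alg A I)"
      using hom cls unfolding hom_def by simp
    then have "\<forall>i<n. ?a i \<in> carr A"
      using True by (simp add: power_alg_def)
    moreover have "\<forall>(s,t)\<in>R. eval A ?a s = eval A ?a t"
    proof clarify
      fix s t assume "(s,t) \<in> R"
      then have "wf_trm ar n s" "wf_trm ar n t" "R `` {s} = R `` {t}"
        using equiv_class_eq_iff[OF term_congruence_equiv] by auto
      then show "eval A ?a s = eval A ?a t"
        using coord by metis
    qed
    ultimately have "eval A ?a p = eval A ?a q"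
      by (rule RadD[OF Rad])
    then show ?thesis
      using coord wf by simp
  next
    case False
    have "e (R `` {p}) \<in> carr (power_alg A I)" "e (R `` {q}) \<in> carr (power_alg A I)"
      using hom cls wf unfolding hom_def by blast+
    with False show ?thesis
      by (simp add: power_alg_def)
  qed
  then have "R `` {p} = R `` {q}"
    using inj_onD[OF inj _ cls cls] wf by blast
  then show "(p,q) \<in> R"
    using wf eq_equiv_class_iff[OF term_congruence_equiv] by simp
qed

end

subsection \<open>The finitary part of a radical\<close>

definition fin_Rad :: "('f \<Rightarrow> nat) \<Rightarrow> ('f,'a) alg \<Rightarrow> nat \<Rightarrow> (('f,nat) trm \<times> ('f,nat) trm) set
    \<Rightarrow> (('f,nat) trm \<times> ('f,nat) trm) set" where
  "fin_Rad ar A n S = (\<Union>S0\<in>{S0. S0 \<subseteq> S \<and> finite S0}. Rad ar A n S0)"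

lemma fin_Rad_iff: "pq \<in> fin_Rad ar A n S \<longleftrightarrow> (\<exists>S0\<subseteq>S. finite S0 \<and> pq \<in> Rad ar A n S0)"
  unfolding fin_Rad_def by blast

lemma finite_subset_fin_Rad:
  assumes "finite X" and "X \<subseteq> fin_Rad ar A n S"
  shows "\<exists>S0\<subseteq>S. finite S0 \<and> X \<subseteq> Rad ar A n S0"
  using assms
proof (induction X rule: finite_induct)
  case (insert x X)
  then obtain S0 S1 where "S0 \<subseteq> S" "finite S0" "X \<subseteq> Rad ar A n S0"
    and "S1 \<subseteq> S" "finite S1" "x \<in> Rad ar A n S1"
    by (auto simp: fin_Rad_iff)
  then show ?case
    using Rad_mono[of S0 "S0 \<union> S1"] Rad_mono[of S1 "S0 \<union> S1"]
    by (intro exI[of _ "S0 \<union> S1"]) blast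
qed blast

lemma subset_fin_Rad:
  assumes "S \<subseteq> tpairs ar n"
  shows "S \<subseteq> fin_Rad ar A n S"
proof
  fix x assume "x \<in> S"
  then have "x \<in> Rad ar A n {x}"
    using assms subset_Rad[of "{x}"] by auto
  with \<open>x \<in> S\<close> show "x \<in> fin_Rad ar A n S"
    unfolding fin_Rad_iff by (intro exI[of _ "{x}"]) simp
qed

lemma equiv_fin_Rad: "equiv {t. wf_trm ar n t} (fin_Rad ar A n S)"
proof (rule equivI)
  show "fin_Rad ar A n S \<subseteq> {t. wf_trm ar n t} \<times> {t. wf_trm ar n t}"
    by (auto simp: fin_Rad_iff dest: Rad_wf)
  show "refl_on {t. wf_trm ar n t} (fin_Rad ar A n S)"
  proof (rule refl_onI)
    fix t assume "t \<in> {t. wf_trm ar n t}"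
    then have "(t,t) \<in> Rad ar A n {}"
      by (auto intro: RadI)
    then show "(t,t) \<in> fin_Rad ar A n S"
      unfolding fin_Rad_iff by blast
  qed
  show "sym (fin_Rad ar A n S)"
  proof (rule symI)
    fix s t assume "(s,t) \<in> fin_Rad ar A n S"
    then obtain S0 where "S0 \<subseteq> S" "finite S0" "(s,t) \<in> Rad ar A n S0"
      unfolding fin_Rad_iff by blast
    moreover have "sym (Rad ar A n S0)"
      using equiv_Rad unfolding equiv_def by blast
    ultimately show "(t,s) \<in> fin_Rad ar A n S"
      unfolding fin_Rad_iff sym_def by blast
  qed
  show "trans (fin_Rad ar A n S)"
  proof (rule transI)
    fix x y z assume "(x,y) \<in> fin_Rad ar A n S" and "(y,z) \<in> fin_Rad ar A n S"
    then obtain S0 where "S0 \<subseteq> S" "finite S0" "{(x,y), (y,z)} \<subseteq> Rad ar A n S0"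
      using finite_subset_fin_Rad[of "{(x,y), (y,z)}" ar A n S] by auto
    then show "(x,z) \<in> fin_Rad ar A n S"
      using equiv_Rad[of ar n A S0] unfolding equiv_def trans_def fin_Rad_iff by blast
  qed
qed

lemma term_congruence_fin_Rad: "term_congruence ar n (fin_Rad ar A n S)"
  unfolding term_congruence_def
proof (intro conjI allI impI equiv_fin_Rad)
  fix f ss ts
  assume len: "length ss = ar f" and rel: "list_all2 (\<lambda>s t. (s,t) \<in> fin_Rad ar A n S) ss ts"
  then obtain S0 where S0: "S0 \<subseteq> S" "finite S0" "set (zip ss ts) \<subseteq> Rad ar A n S0"
    using finite_subset_fin_Rad[of "set (zip ss ts)" ar A n S] by (auto simp: list_all2_iff)
  have "list_all2 (\<lambda>s t. (s,t) \<in> Rad ar A n S0) ss ts"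
    using S0(3) rel by (auto simp: list_all2_iff)
  then have "(App f ss, App f ts) \<in> Rad ar A n S0"
    using len by (rule Rad_App)
  with S0(1,2) show "(App f ss, App f ts) \<in> fin_Rad ar A n S"
    unfolding fin_Rad_iff by blast
qed

lemma fin_Rad_closed_under_qid:
  assumes A: "is_alg ar A" and valid: "sat_qid A \<phi>" and concl: "snd \<phi> \<in> tpairs ar m"
    and \<sigma>: "\<forall>i. wf_trm ar n (\<sigma> i)"
    and hyps: "\<forall>(s,t)\<in>set (fst \<phi>). (trm_subst \<sigma> s, trm_subst \<sigma> t) \<in> fin_Rad ar A n S"
  shows "(trm_subst \<sigma> (fst (snd \<phi>)), trm_subst \<sigma> (snd (snd \<phi>))) \<in> fin_Rad ar A n S"
proof -
  let ?inst = "\<lambda>(s,t). (trm_subst \<sigma> s, trm_subst \<sigma> t)"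
  have "?inst ` set (fst \<phi>) \<subseteq> fin_Rad ar A n S"
    using hyps by auto
  then obtain S0 where S0: "S0 \<subseteq> S" "finite S0" "?inst ` set (fst \<phi>) \<subseteq> Rad ar A n S0"
    using finite_subset_fin_Rad[OF finite_imageI[OF finite_set]] by metis
  have "(trm_subst \<sigma> (fst (snd \<phi>)), trm_subst \<sigma> (snd (snd \<phi>))) \<in> Rad ar A n S0"
  proof (rule RadI)
    show "wf_trm ar n (trm_subst \<sigma> (fst (snd \<phi>)))" "wf_trm ar n (trm_subst \<sigma> (snd (snd \<phi>)))"
      using concl \<sigma> wf_trm_subst[of ar m _ n \<sigma>] by (auto simp: tpairs_def)
  next
    fix a assume a: "\<forall>i<n. a i \<in> carr A" and sol: "\<forall>(s,t)\<in>S0. eval A a s = eval A a t"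
    define b where "b i = eval A a (\<sigma> i)" for i
    have "\<forall>i. b i \<in> carr A"
      unfolding b_def using eval_in_carr[OF A a] \<sigma> by blast
    moreover have "\<forall>(s,t)\<in>set (fst \<phi>). eval A b s = eval A b t"
    proof clarify
      fix s t assume "(s,t) \<in> set (fst \<phi>)"
      then have "(trm_subst \<sigma> s, trm_subst \<sigma> t) \<in> Rad ar A n S0"
        using S0(3) by auto
      then have "eval A a (trm_subst \<sigma> s) = eval A a (trm_subst \<sigma> t)"
        by (rule RadD[OF _ a sol])
      then show "eval A b s = eval A b t"
        unfolding b_def by (simp only: eval_trm_subst)
    qed
    ultimately have "eval A b (fst (snd \<phi>)) = eval A b (snd (snd \<phi>))"
      using valid unfolding sat_qid_def by blast
    then show "eval A a (trm_subst \<sigma> (fst (snd \<phi>))) = eval A a (trm_subst \<sigma> (snd (snd \<phi>)))"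
      unfolding b_def by (simp only: eval_trm_subst)
  qed
  with S0(1,2) show ?thesis
    unfolding fin_Rad_iff by blast
qed

lemma in_qvar_term_quotient_fin_Rad:
  assumes A: "is_alg ar A" and "n \<ge> 1"
  shows "in_qvar ar A (term_quotient ar n (fin_Rad ar A n S))"
  unfolding in_qvar_def
proof (intro conjI allI impI)
  let ?R = "fin_Rad ar A n S"
  let ?Q = "term_quotient ar n ?R"
  note cong = term_congruence_fin_Rad[of ar n A S]
  show "is_alg ar ?Q"
    using term_quotient_is_alg[OF cong assms(2)] .
  fix \<phi> assume "wf_qid ar \<phi>" and valid: "sat_qid A \<phi>"
  then obtain m where m: "set (fst \<phi>) \<subseteq> tpairs ar m" "snd \<phi> \<in> tpairs ar m"
    unfolding wf_qid_def by blast
  show "sat_qid ?Q \<phi>"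
    unfolding sat_qid_def
  proof (intro allI impI)
    fix d assume d: "\<forall>i. d i \<in> carr ?Q"
      and hyps: "\<forall>(s,t)\<in>set (fst \<phi>). eval ?Q d s = eval ?Q d t"
    define \<sigma> where "\<sigma> i = (SOME t. t \<in> d i)" for i
    have \<sigma>: "\<forall>i. wf_trm ar n (\<sigma> i)" and d_eq: "d = (\<lambda>i. ?R `` {\<sigma> i})"
      using term_quotient_rep[OF cong] d unfolding \<sigma>_def by auto
    have inst: "eval ?Q d s = eval ?Q d t \<longleftrightarrow> (trm_subst \<sigma> s, trm_subst \<sigma> t) \<in> ?R"
      if "(s,t) \<in> tpairs ar m" for s t
    proof -
      have "wf_trm ar n (trm_subst \<sigma> s)" "wf_trm ar n (trm_subst \<sigma> t)"
        using that \<sigma> by (auto simp: tpairs_def intro: wf_trm_subst)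
      moreover have "eval ?Q d s = ?R `` {trm_subst \<sigma> s}" "eval ?Q d t = ?R `` {trm_subst \<sigma> t}"
        using that \<sigma> eval_term_quotient[OF cong] unfolding d_eq tpairs_def by auto
      ultimately show ?thesis
        using eq_equiv_class_iff[OF term_congruence_equiv[OF cong]] by simp
    qed
    have "\<forall>(s,t)\<in>set (fst \<phi>). (trm_subst \<sigma> s, trm_subst \<sigma> t) \<in> ?R"
      using hyps m(1) inst by blast
    with A valid m(2) \<sigma> have "(trm_subst \<sigma> (fst (snd \<phi>)), trm_subst \<sigma> (snd (snd \<phi>))) \<in> ?R"
      by (rule fin_Rad_closed_under_qid)
    with m(2) show "eval ?Q d (fst (snd \<phi>)) = eval ?Q d (snd (snd \<phi>))"
      using inst[of "fst (snd \<phi>)" "snd (snd \<phi>)"] by simp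
  qed
qed

subsection \<open>Ultrafilters and ultrapowers\<close>

definition filter_on :: "'i set \<Rightarrow> 'i set set \<Rightarrow> bool" where
  "filter_on I F \<longleftrightarrow> F \<subseteq> Pow I \<and> I \<in> F \<and> {} \<notin> F \<and>
     (\<forall>X\<in>F. \<forall>Y\<in>F. X \<inter> Y \<in> F) \<and> (\<forall>X\<in>F. \<forall>Y. X \<subseteq> Y \<and> Y \<subseteq> I \<longrightarrow> Y \<in> F)"

lemma filter_onD:
  assumes "filter_on I F"
  shows filter_on_subset: "X \<in> F \<Longrightarrow> X \<subseteq> I"
    and filter_on_top: "I \<in> F"
    and filter_on_Int: "X \<in> F \<Longrightarrow> Y \<in> F \<Longrightarrow> X \<inter> Y \<in> F"
    and filter_on_mono: "X \<in> F \<Longrightarrow> X \<subseteq> Y \<Longrightarrow> Y \<subseteq> I \<Longrightarrow> Y \<in> F"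
  using assms unfolding filter_on_def by blast+

lemma filter_on_Union_chain:
  assumes "C \<noteq> {}" and filters: "\<And>F. F \<in> C \<Longrightarrow> filter_on I F"
    and chain: "\<And>F G. F \<in> C \<Longrightarrow> G \<in> C \<Longrightarrow> F \<subseteq> G \<or> G \<subseteq> F"
  shows "filter_on I (\<Union>C)"
  unfolding filter_on_def
proof (intro conjI ballI allI impI)
  obtain F where "F \<in> C"
    using assms(1) by blast
  then show "I \<in> \<Union>C"
    using filter_on_top[OF filters] by blast
  show "\<Union>C \<subseteq> Pow I" and "{} \<notin> \<Union>C"
    using filters unfolding filter_on_def by blast+
next
  fix X Y assume "X \<in> \<Union>C" and "Y \<in> \<Union>C"
  then obtain F G where FG: "F \<in> C" "G \<in> C" and "X \<in> F" "Y \<in> G"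
    by blast
  then obtain H where "H \<in> C" "X \<in> H" "Y \<in> H"
    using chain[OF FG] by blast
  then show "X \<inter> Y \<in> \<Union>C"
    using filter_on_Int[OF filters] by blast
next
  fix X Y assume "X \<in> \<Union>C" and "X \<subseteq> Y \<and> Y \<subseteq> I"
  then show "Y \<in> \<Union>C"
    using filter_on_mono[OF filters] by blast
qed

lemma filter_on_refine:
  assumes F: "filter_on I F" and "X \<subseteq> I" and "I - X \<notin> F"
  shows "filter_on I {Y. Y \<subseteq> I \<and> (\<exists>Z\<in>F. Z \<inter> X \<subseteq> Y)}" (is "filter_on I ?G")
  unfolding filter_on_def
proof (intro conjI ballI allI impI)
  show "?G \<subseteq> Pow I"
    by blast
  show "I \<in> ?G"
    using filter_on_top[OF F] by blast
  show "{} \<notin> ?G"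
  proof
    assume "{} \<in> ?G"
    then obtain Z where "Z \<in> F" and "Z \<inter> X \<subseteq> {}"
      by blast
    then have "Z \<subseteq> I - X"
      using filter_on_subset[OF F] by blast
    then have "I - X \<in> F"
      using filter_on_mono[OF F \<open>Z \<in> F\<close>] by blast
    with assms(3) show False ..
  qed
next
  fix Y1 Y2 assume "Y1 \<in> ?G" and "Y2 \<in> ?G"
  then obtain Z1 Z2 where "Z1 \<in> F" "Z2 \<in> F" "Z1 \<inter> X \<subseteq> Y1" "Z2 \<inter> X \<subseteq> Y2" "Y1 \<subseteq> I"
    by blast
  moreover have "Z1 \<inter> Z2 \<in> F"
    using filter_on_Int[OF F calculation(1,2)] .
  ultimately show "Y1 \<inter> Y2 \<in> ?G"
    by (intro CollectI conjI bexI[of _ "Z1 \<inter> Z2"]) blast+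
next
  fix Y1 Y2 assume "Y1 \<in> ?G" and "Y1 \<subseteq> Y2 \<and> Y2 \<subseteq> I"
  then show "Y2 \<in> ?G"
    by blast
qed

lemma ultrafilter_extends:
  assumes F: "filter_on I F"
  shows "\<exists>U. ultrafilter_on I U \<and> F \<subseteq> U"
proof -
  let ?filters = "{G. filter_on I G \<and> F \<subseteq> G}"
  have "\<exists>M\<in>?filters. \<forall>G\<in>?filters. M \<subseteq> G \<longrightarrow> G = M"
  proof (rule subset_Zorn_nonempty)
    fix C assume C: "C \<noteq> {}" and "subset.chain ?filters C"
    then have "C \<subseteq> ?filters" and "\<And>G H. G \<in> C \<Longrightarrow> H \<in> C \<Longrightarrow> G \<subseteq> H \<or> H \<subseteq> G"
      unfolding subset_chain_def by blast+
    then have "filter_on I (\<Union>C)" and "F \<subseteq> \<Union>C"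
      using filter_on_Union_chain[OF C] C by blast+
    then show "\<Union>C \<in> ?filters"
      by blast
  qed (use F in blast)
  then obtain M where "M \<in> ?filters" and max: "\<forall>G\<in>?filters. M \<subseteq> G \<longrightarrow> G = M"
    by (rule bexE)
  then have M: "filter_on I M" "F \<subseteq> M"
    by simp_all
  have maximal: "G = M" if "filter_on I G" and "M \<subseteq> G" for G
    using max that M(2) by simp
  have "X \<in> M \<or> I - X \<in> M" if "X \<subseteq> I" for X
  proof (rule ccontr)
    let ?G = "{Y. Y \<subseteq> I \<and> (\<exists>Z\<in>M. Z \<inter> X \<subseteq> Y)}"
    assume "\<not> (X \<in> M \<or> I - X \<in> M)"
    then have "filter_on I ?G" and "X \<notin> M"
      using filter_on_refine[OF M(1) that] by blast+
    moreover have "M \<subseteq> ?G"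
      using filter_on_subset[OF M(1)] by blast
    ultimately have "?G = M"
      using maximal by blast
    moreover have "X \<in> ?G"
      using filter_on_top[OF M(1)] that by blast
    ultimately show False
      using \<open>X \<notin> M\<close> by blast
  qed
  with M(1) have "ultrafilter_on I M"
    unfolding ultrafilter_on_def filter_on_def by (elim conjE) (intro conjI; blast)
  with M(2) show ?thesis
    by blast
qed

lemma ultrafilter_finite_subsets:
  "\<exists>U. ultrafilter_on {T. T \<subseteq> S \<and> finite T} U \<and> (\<forall>x\<in>S. {T. T \<subseteq> S \<and> finite T \<and> x \<in> T} \<in> U)"
proof -
  let ?I = "{T. T \<subseteq> S \<and> finite T}"
  let ?cone = "\<lambda>T. {T'\<in>?I. T \<subseteq> T'}"
  define F where "F = {X. X \<subseteq> ?I \<and> (\<exists>T\<in>?I. ?cone T \<subseteq> X)}"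
  have F_memI: "X \<in> F" if "T \<in> ?I" and "?cone T \<subseteq> X" and "X \<subseteq> ?I" for T X
    unfolding F_def using that by (intro CollectI conjI bexI[of _ T]) simp_all
  have cone_in_F: "?cone T \<in> F" if "T \<in> ?I" for T
    using F_memI[OF that] by blast
  have "filter_on ?I F"
    unfolding filter_on_def
  proof (intro conjI ballI allI impI)
    show "F \<subseteq> Pow ?I"
      unfolding F_def by blast
    have "?cone {} = ?I"
      by blast
    then show "?I \<in> F"
      using cone_in_F[of "{}"] by simp
    show "{} \<notin> F"
    proof
      assume "{} \<in> F"
      then obtain T where "T \<in> ?I" and "?cone T \<subseteq> {}"
        unfolding F_def by blast
      then show False
        by blast
    qed
  next
    fix X Y assume "X \<in> F" and "Y \<in> F"
    obtain T1 where T1: "T1 \<in> ?I" "?cone T1 \<subseteq> X" and "X \<subseteq> ?I"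
      using \<open>X \<in> F\<close> unfolding F_def by blast
    obtain T2 where T2: "T2 \<in> ?I" "?cone T2 \<subseteq> Y"
      using \<open>Y \<in> F\<close> unfolding F_def by blast
    have "?cone (T1 \<union> T2) \<subseteq> ?cone T1 \<inter> ?cone T2"
      by auto
    then have "?cone (T1 \<union> T2) \<subseteq> X \<inter> Y" and "X \<inter> Y \<subseteq> ?I"
      using T1(2) T2(2) \<open>X \<subseteq> ?I\<close> by auto
    moreover have "T1 \<union> T2 \<in> ?I"
      using T1 T2 by simp
    ultimately show "X \<inter> Y \<in> F"
      by (rule_tac F_memI)
  next
    fix X Y assume "X \<in> F" and "X \<subseteq> Y \<and> Y \<subseteq> ?I"
    moreover obtain T where "T \<in> ?I" "?cone T \<subseteq> X"
      using \<open>X \<in> F\<close> unfolding F_def by blast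
    ultimately show "Y \<in> F"
      using F_memI[of T Y] by blast
  qed
  then obtain U where U: "ultrafilter_on ?I U" and "F \<subseteq> U"
    using ultrafilter_extends by blast
  moreover have "{T. T \<subseteq> S \<and> finite T \<and> x \<in> T} \<in> F" if "x \<in> S" for x
  proof -
    have "{T. T \<subseteq> S \<and> finite T \<and> x \<in> T} = ?cone {x}"
      using that by auto
    then show ?thesis
      using cone_in_F[of "{x}"] that by simp
  qed
  ultimately show ?thesis
    by blast
qed

lemma ultrafilter_onD:
  assumes "ultrafilter_on I U"
  shows ultrafilter_on_top: "I \<in> U"
    and ultrafilter_on_empty: "{} \<notin> U"
    and ultrafilter_on_Int: "X \<in> U \<Longrightarrow> Y \<in> U \<Longrightarrow> X \<inter> Y \<in> U"
    and ultrafilter_on_mono: "X \<in> U \<Longrightarrow> X \<subseteq> Y \<Longrightarrow> Y \<subseteq> I \<Longrightarrow> Y \<in> U"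
  using assms unfolding ultrafilter_on_def by blast+

context
  fixes A :: "('f,'a) alg" and I :: "'i set" and U :: "'i set set"
  assumes ultra: "ultrafilter_on I U"
begin

lemma up_class_eq:
  assumes "g \<in> carr (power_alg A I)" and "h \<in> carr (power_alg A I)"
  shows "up_class A I U g = up_class A I U h \<longleftrightarrow> {i \<in> I. g i = h i} \<in> U"
proof -
  have agree_trans: "{i \<in> I. f i = f'' i} \<in> U"
    if "{i \<in> I. f i = f' i} \<in> U" and "{i \<in> I. f' i = f'' i} \<in> U" for f f' f'' :: "'i \<Rightarrow> 'a"
    by (rule ultrafilter_on_mono[OF ultra ultrafilter_on_Int[OF ultra that]]) auto
  have agree_sym: "{i \<in> I. f i = f' i} = {i \<in> I. f' i = f i}" for f f' :: "'i \<Rightarrow> 'a"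
    by auto
  have agree_refl: "{i \<in> I. f i = f i} \<in> U" for f :: "'i \<Rightarrow> 'a"
    using ultrafilter_on_top[OF ultra] by simp
  show ?thesis
  proof
    assume eq: "up_class A I U g = up_class A I U h"
    have "g \<in> up_class A I U g"
      using assms(1) agree_refl[of g] unfolding up_class_def by simp
    with eq have "g \<in> up_class A I U h"
      by simp
    then have "{i \<in> I. h i = g i} \<in> U"
      unfolding up_class_def by simp
    then show "{i \<in> I. g i = h i} \<in> U"
      using agree_sym[of g h] by simp
  next
    assume gh: "{i \<in> I. g i = h i} \<in> U"
    show "up_class A I U g = up_class A I U h"
    proof (rule set_eqI)
      fix k
      have "{i \<in> I. g i = k i} \<in> U \<longleftrightarrow> {i \<in> I. h i = k i} \<in> U"
        using agree_trans[OF gh, of k] agree_trans[of h g k] gh agree_sym[of g h] by auto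
      then show "k \<in> up_class A I U g \<longleftrightarrow> k \<in> up_class A I U h"
        unfolding up_class_def by simp
    qed
  qed
qed

lemma ultrafilter_agree_map:
  assumes "list_all2 (\<lambda>g h. {i \<in> I. g i = h i} \<in> U) gs hs"
  shows "{i \<in> I. map (\<lambda>g. g i) gs = map (\<lambda>g. g i) hs} \<in> U"
  using assms
proof (induction rule: list_all2_induct)
  case Nil
  then show ?case
    using ultrafilter_on_top[OF ultra] by simp
next
  case (Cons g gs h hs)
  have "{i \<in> I. g i = h i} \<inter> {i \<in> I. map (\<lambda>g. g i) gs = map (\<lambda>g. g i) hs} \<in> U"
    using ultrafilter_on_Int[OF ultra Cons.hyps(1) Cons.IH] .
  then show ?case
    by (rule ultrafilter_on_mono[OF ultra]) auto
qed

lemma ultrapower_ops: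
  assumes A: "is_alg ar A" and gs: "set gs \<subseteq> carr (power_alg A I)" and len: "length gs = ar f"
  shows "ops (ultrapower A I U) f (map (up_class A I U) gs) = up_class A I U (ops (power_alg A I) f gs)"
proof -
  let ?P = "power_alg A I"
  define hs where "hs = map (\<lambda>g. SOME h. h \<in> up_class A I U g) gs"
  have rep: "(SOME h. h \<in> up_class A I U g) \<in> carr ?P
      \<and> {i \<in> I. g i = (SOME h. h \<in> up_class A I U g) i} \<in> U" if "g \<in> carr ?P" for g
  proof -
    have "g \<in> up_class A I U g"
      using that ultrafilter_on_top[OF ultra] unfolding up_class_def by simp
    then have "(SOME h. h \<in> up_class A I U g) \<in> up_class A I U g"
      by (rule someI[where P = "\<lambda>h. h \<in> up_class A I U g"])
    then show ?thesis
      unfolding up_class_def by simp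
  qed
  have hs: "set hs \<subseteq> carr ?P" and "length hs = ar f"
    using gs rep len unfolding hs_def by auto
  have "list_all2 (\<lambda>g h. {i \<in> I. g i = h i} \<in> U) gs hs"
    using gs rep unfolding hs_def by (auto simp: list_all2_map2 list_all2_same)
  then have "{i \<in> I. ops ?P f gs i = ops ?P f hs i} \<in> U"
    by (rule ultrafilter_on_mono[OF ultra ultrafilter_agree_map]) (auto simp: power_alg_def)
  moreover have "ops ?P f gs \<in> carr ?P" and "ops ?P f hs \<in> carr ?P"
    using is_alg_power_alg[OF A] gs hs len \<open>length hs = ar f\<close> unfolding is_alg_def by auto
  ultimately have "up_class A I U (ops ?P f gs) = up_class A I U (ops ?P f hs)"
    using up_class_eq by simp
  moreover have "ops (ultrapower A I U) f (map (up_class A I U) gs) = up_class A I U (ops ?P f hs)"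
    by (simp add: ultrapower_def hs_def comp_def)
  ultimately show ?thesis
    by simp
qed

lemma hom_up_class:
  assumes "is_alg ar A"
  shows "hom ar (power_alg A I) (ultrapower A I U) (up_class A I U)"
  unfolding hom_def using ultrapower_ops[OF assms] by (simp add: ultrapower_def)

end

lemma not_in_Rad_ultrapower:
  assumes A: "is_alg ar A" and ultra: "ultrafilter_on I U"
    and points: "\<forall>j\<in>I. \<forall>i<n. a j i \<in> carr A"
    and solutions: "\<forall>(s,t)\<in>S. {j \<in> I. eval A (a j) s = eval A (a j) t} \<in> U"
    and separating: "\<forall>j\<in>I. eval A (a j) p \<noteq> eval A (a j) q"
    and S: "S \<subseteq> tpairs ar n"
  shows "(p,q) \<notin> Rad ar (ultrapower A I U) n S"
proof
  let ?P = "power_alg A I"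
  let ?UP = "ultrapower A I U"
  assume pq: "(p,q) \<in> Rad ar ?UP n S"
  define G where "G i = (\<lambda>j. if j \<in> I then a j i else undefined)" for i
  define x where "x = (\<lambda>i. up_class A I U (G i))"
  have G: "\<forall>i<n. G i \<in> carr ?P"
    using points by (simp add: G_def power_alg_def)
  then have x: "\<forall>i<n. x i \<in> carr ?UP"
    by (simp add: x_def ultrapower_def)
  have agree: "eval ?UP x s = eval ?UP x t \<longleftrightarrow> {j \<in> I. eval A (a j) s = eval A (a j) t} \<in> U"
    if "wf_trm ar n s" and "wf_trm ar n t" for s t
  proof -
    have coord: "eval ?P G u j = eval A (a j) u" if "j \<in> I" for j u
      using eval_power_alg[OF that, of A G u] that by (simp add: G_def)
    have "eval ?UP x u = up_class A I U (eval ?P G u)" if "wf_trm ar n u" for u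
      using hom_eval[OF is_alg_power_alg[OF A] hom_up_class[OF ultra A] G that] by (simp add: x_def)
    moreover have "{j \<in> I. eval ?P G s j = eval ?P G t j} = {j \<in> I. eval A (a j) s = eval A (a j) t}"
      using coord by auto
    ultimately show ?thesis
      using up_class_eq[OF ultra eval_in_carr[OF is_alg_power_alg[OF A] G that(1)]
          eval_in_carr[OF is_alg_power_alg[OF A] G that(2)]] that by simp
  qed
  have "\<forall>(s,t)\<in>S. eval ?UP x s = eval ?UP x t"
  proof clarify
    fix s t assume "(s,t) \<in> S"
    then have "wf_trm ar n s" "wf_trm ar n t" "{j \<in> I. eval A (a j) s = eval A (a j) t} \<in> U"
      using S solutions unfolding tpairs_def by auto
    then show "eval ?UP x s = eval ?UP x t"
      using agree by simp
  qed
  then have "eval ?UP x p = eval ?UP x q"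
    by (rule RadD[OF pq x])
  then have "{j \<in> I. eval A (a j) p = eval A (a j) q} \<in> U"
    using agree Rad_wf[OF pq] by simp
  moreover have "{j \<in> I. eval A (a j) p = eval A (a j) q} = {}"
    using separating by auto
  ultimately show False
    using ultrafilter_on_empty[OF ultra] by simp
qed

lemma ultrapower_not_geom_equiv:
  fixes A :: "('f,'a) alg"
  assumes A: "is_alg ar A" and "n \<ge> 1" and S: "S \<subseteq> tpairs ar n"
    and pq: "(p,q) \<in> Rad ar A n S" and not_fin: "(p,q) \<notin> fin_Rad ar A n S"
  shows "\<exists>U. ultrafilter_on {T. T \<subseteq> S \<and> finite T} U
           \<and> \<not> geom_equiv ar A (ultrapower A {T. T \<subseteq> S \<and> finite T} U)"
proof -
  let ?I = "{T. T \<subseteq> S \<and> finite T}"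
  have "\<forall>T\<in>?I. \<exists>d. (\<forall>i<n. d i \<in> carr A) \<and> (\<forall>(s,t)\<in>T. eval A d s = eval A d t)
      \<and> eval A d p \<noteq> eval A d q"
  proof (rule ballI, rule ccontr)
    fix T assume "T \<in> ?I"
    assume no_witness: "\<nexists>d. (\<forall>i<n. d i \<in> carr A) \<and> (\<forall>(s,t)\<in>T. eval A d s = eval A d t)
      \<and> eval A d p \<noteq> eval A d q"
    have "(p,q) \<in> Rad ar A n T"
      using Rad_wf[OF pq] no_witness by (intro RadI) blast+
    with \<open>T \<in> ?I\<close> not_fin show False
      unfolding fin_Rad_iff by blast
  qed
  from bchoice[OF this] obtain a where a: "\<forall>T\<in>?I. (\<forall>i<n. a T i \<in> carr A)
      \<and> (\<forall>(s,t)\<in>T. eval A (a T) s = eval A (a T) t) \<and> eval A (a T) p \<noteq> eval A (a T) q" ..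
  from ultrafilter_finite_subsets[of S] obtain U
    where U: "ultrafilter_on ?I U" and cones: "\<forall>x\<in>S. {T. T \<subseteq> S \<and> finite T \<and> x \<in> T} \<in> U"
    by (elim exE conjE)
  have "(p,q) \<notin> Rad ar (ultrapower A ?I U) n S"
  proof (rule not_in_Rad_ultrapower[OF A U _ _ _ S])
    show "\<forall>T\<in>?I. \<forall>i<n. a T i \<in> carr A" and "\<forall>T\<in>?I. eval A (a T) p \<noteq> eval A (a T) q"
      using a by blast+
    show "\<forall>(s,t)\<in>S. {T \<in> ?I. eval A (a T) s = eval A (a T) t} \<in> U"
    proof clarify
      fix s t assume "(s,t) \<in> S"
      then show "{T \<in> ?I. eval A (a T) s = eval A (a T) t} \<in> U"
        using cones a by (rule_tac ultrafilter_on_mono[OF U]) auto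
    qed
  qed
  with pq have "Rad ar A n S \<noteq> Rad ar (ultrapower A ?I U) n S"
    by blast
  with U S \<open>n \<ge> 1\<close> show ?thesis
    unfolding geom_equiv_def by blast
qed

theorem mainTheorem4:
  fixes ar :: "'f \<Rightarrow> nat" and A :: "('f,'a) alg"
  assumes "is_alg ar A"
    and "\<not> q_omega_compact ar A"
  shows "(\<exists>B :: ('f, ('f,nat) trm set) alg.
            fin_gen ar B \<and> in_pvar ar A B \<noteq> in_qvar ar A B)
       \<and> (\<exists>(I :: (('f,nat) trm \<times> ('f,nat) trm) set set) U.
            ultrafilter_on I U \<and> \<not> geom_equiv ar A (ultrapower A I U))"
proof -
  obtain n S p q where n: "n \<ge> 1" and S: "S \<subseteq> tpairs ar n" and pq: "(p,q) \<in> Rad ar A n S"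
    and not_fin: "(p,q) \<notin> fin_Rad ar A n S"
    using assms(2) unfolding q_omega_compact_def fin_Rad_iff by auto
  let ?R = "fin_Rad ar A n S"
  have "(p,q) \<in> Rad ar A n ?R"
    using pq Rad_mono[OF subset_fin_Rad[OF S]] by blast
  then have "\<not> in_pvar ar A (term_quotient ar n ?R)"
    using term_quotient_in_pvar_imp_Rad_subset[OF term_congruence_fin_Rad] not_fin by blast
  moreover have "in_qvar ar A (term_quotient ar n ?R)"
    by (rule in_qvar_term_quotient_fin_Rad[OF assms(1) n])
  moreover have "fin_gen ar (term_quotient ar n ?R)"
    by (rule term_quotient_fin_gen[OF term_congruence_fin_Rad])
  moreover have "\<exists>U. ultrafilter_on {T. T \<subseteq> S \<and> finite T} U
      \<and> \<not> geom_equiv ar A (ultrapower A {T. T \<subseteq> S \<and> finite T} U)"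
    by (rule ultrapower_not_geom_equiv[OF assms(1) n S pq not_fin])
  ultimately show ?thesis
    by blast
qed

end
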